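(* For every $n\ge1$, $\hat r_n\le\frac85$.
   Context: Equal responsibilities $1/n$, chores $e_1,e_2,\ldots,e_m$. A picking order is $S=(S_1,\ldots,S_m)\in[n]^m$; it allocates $A_i(S)=\{e_r:S_r=i\}$ to agent $i$. For an agent $i$ with additive disvaluation $c_i$ satisfying $c_i(e_1)\ge c_i(e_2)\ge\cdots$, let $CS_i=\max\{\frac1n c_i(\{e_1,\ldots,e_m\}),c_i(e_1),c_i(e_n)+c_i(e_{n+1})\}$ (with $c_i(e_j)=0$ for $j>m$). Let $r_{n,m}(S)=\sup_{i}\sup_{c_i}c_i(A_i(S))/CS_i$, the supremum over agents and over such non-increasing additive $c_i$. $S$ is a ridge picking order if $m\ge 2n$, $S_r=r$ for $1\le r\le n$ and $S_{n+r}=n-r+1$ for $1\le r\le n$ (agent $i$ gets $e_i$ and $e_{2n-i+1}$). Let $\hat r_{n,m}=\min\{r_{n,m}(S):S\text{ a ridge picking order of length }m\}$ and $\hat r_n=\sup_{m\ge 2n}\hat r_{n,m}$. *)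

theory Defs
  imports Complex_Main "HOL-Library.Extended_Real"
begin

(* Agents are 1..n, chores are e_1..e_m, identified with indices 1..m.
   A picking order of length m is a list S with S!(r-1) = S_r in {1..n}. *)

definition picking_order :: "nat \<Rightarrow> nat \<Rightarrow> nat list \<Rightarrow> bool" where
  "picking_order n m S \<longleftrightarrow> length S = m \<and> set S \<subseteq> {1..n}"

definition alloc :: "nat list \<Rightarrow> nat \<Rightarrow> nat set" where
  "alloc S i = {r. 1 \<le> r \<and> r \<le> length S \<and> S ! (r - 1) = i}"

(* additive disvaluation over chores e_1..e_m, given by c j = c_i(e_j):
   nonnegative and non-increasing in j *)
definition valid_disval :: "nat \<Rightarrow> (nat \<Rightarrow> real) \<Rightarrow> bool" where
  "valid_disval m c \<longleftrightarrow> (\<forall>j. 1 \<le> j \<longrightarrow> j \<le> m \<longrightarrow> 0 \<le> c j)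
     \<and> (\<forall>j k. 1 \<le> j \<longrightarrow> j \<le> k \<longrightarrow> k \<le> m \<longrightarrow> c k \<le> c j)"

(* c_i(e_j), with the convention c_i(e_j) = 0 for j > m *)
definition cext :: "nat \<Rightarrow> (nat \<Rightarrow> real) \<Rightarrow> nat \<Rightarrow> real" where
  "cext m c j = (if 1 \<le> j \<and> j \<le> m then c j else 0)"

definition CS :: "nat \<Rightarrow> nat \<Rightarrow> (nat \<Rightarrow> real) \<Rightarrow> real" where
  "CS n m c = max ((\<Sum>j\<in>{1..m}. c j) / real n)
                  (max (cext m c 1) (cext m c n + cext m c (n + 1)))"

(* r_{n,m}(S): supremum over agents i and admissible disvaluations c
   (with CS_i > 0 so that the ratio is defined) of c(A_i(S)) / CS_i *)
definition ratio :: "nat \<Rightarrow> nat list \<Rightarrow> ereal" where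
  "ratio n S = (SUP p \<in> {(i, c). i \<in> {1..n} \<and> valid_disval (length S) c
                                 \<and> 0 < CS n (length S) c}.
       ereal ((\<Sum>j\<in>alloc S (fst p). snd p j) / CS n (length S) (snd p)))"

definition ridge :: "nat \<Rightarrow> nat \<Rightarrow> nat list \<Rightarrow> bool" where
  "ridge n m S \<longleftrightarrow> 2 * n \<le> m \<and> picking_order n m S
     \<and> (\<forall>r. 1 \<le> r \<and> r \<le> n \<longrightarrow> S ! (r - 1) = r)
     \<and> (\<forall>r. 1 \<le> r \<and> r \<le> n \<longrightarrow> S ! (n + r - 1) = n - r + 1)"

definition hat_r_nm :: "nat \<Rightarrow> nat \<Rightarrow> ereal" where
  "hat_r_nm n m = Min (ratio n ` {S. ridge n m S})"

definition hat_r :: "nat \<Rightarrow> ereal" where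
  "hat_r n = (SUP m \<in> {m. 2 * n \<le> m}. hat_r_nm n m)"

end

theory Submission
  imports Defs
begin

(* Agent i receives the weights mu = alpha + beta e_1 + gamma (e_n + e_(n+1)) with
   alpha = g / (5n), beta = max 0 (1 - alpha i) and gamma = 8/5 - alpha n - beta, where g is the
   number of times i is picked in one period of the tail. Then sum_j mu_j c_j is at most
   (n alpha + beta + gamma) CS_i = 8/5 CS_i, and since costs are non-increasing, Abel summation
   reduces c(A_i) <= sum_j mu_j c_j to the prefix condition
   card (A_i \<inter> {1..k}) <= mu_1 + ... + mu_k for all k.

   After the two ridge rounds 1, ..., n, n, ..., 1 the order repeats a period of ten descending
   sweeps over ranges of agents delimited by floor(n/4), floor(2n/5), floor(n/2), floor(5n/8) and
   floor(3n/4). In the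
   tail it suffices to check it at the positions where i is picked; this is done for one period
   by linear arithmetic on each of the six segments of agents, and it propagates to all later
   periods because a period has length at least 5n, i.e. at least g / alpha. *)

section \<open>Abel summation against the CS weights\<close>

lemma sum_nonincreasing_le_weighted_sum:
  fixes c \<mu> :: "nat \<Rightarrow> real"
  assumes A: "A \<subseteq> {1..m}"
    and nonneg: "\<And>j. 1 \<le> j \<Longrightarrow> j \<le> m \<Longrightarrow> 0 \<le> c j"
    and mono: "\<And>j. 1 \<le> j \<Longrightarrow> j < m \<Longrightarrow> c (Suc j) \<le> c j"
    and prefix: "\<And>k. k \<le> m \<Longrightarrow> real (card (A \<inter> {1..k})) \<le> (\<Sum>j=1..k. \<mu> j)"
  shows "(\<Sum>j\<in>A. c j) \<le> (\<Sum>j=1..m. \<mu> j * c j)"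
proof -
  define slack where "slack k = (\<Sum>j=1..k. \<mu> j) - real (card (A \<inter> {1..k}))" for k
  have invariant: "(\<Sum>j\<in>A \<inter> {1..k}. c j) + slack k * c k \<le> (\<Sum>j=1..k. \<mu> j * c j)" if "k \<le> m" for k
    using that
  proof (induction k)
    case (Suc k)
    define new where "new = (if Suc k \<in> A then 1 else 0 :: real)"
    have split: "A \<inter> {1..Suc k} = A \<inter> {1..k} \<union> (if Suc k \<in> A then {Suc k} else {})"
      by (auto simp: le_Suc_eq)
    have sum_A: "(\<Sum>j\<in>A \<inter> {1..Suc k}. c j) = (\<Sum>j\<in>A \<inter> {1..k}. c j) + new * c (Suc k)"
      unfolding split new_def by auto
    have slack_Suc: "slack (Suc k) = slack k + \<mu> (Suc k) - new"
      unfolding slack_def split new_def by (auto simp: card_insert_if)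
    have "slack k * c (Suc k) \<le> slack k * c k"
    proof (cases "k = 0")
      case False
      have "0 \<le> slack k" using prefix[of k] Suc.prems by (simp add: slack_def)
      with False Suc.prems mono[of k] show ?thesis by (simp add: mult_left_mono)
    qed (simp add: slack_def)
    moreover have "(\<Sum>j\<in>A \<inter> {1..Suc k}. c j) + slack (Suc k) * c (Suc k)
        = (\<Sum>j\<in>A \<inter> {1..k}. c j) + slack k * c (Suc k) + \<mu> (Suc k) * c (Suc k)"
      by (simp only: sum_A slack_Suc) (simp add: algebra_simps)
    ultimately show ?case using Suc by simp
  qed (simp add: slack_def)
  have "A \<inter> {1..m} = A" using A by auto
  moreover have "0 \<le> slack m * c m"
  proof (cases "m = 0")
    case False
    then show ?thesis
      using prefix[of m] nonneg[of m] \<open>A \<inter> {1..m} = A\<close> by (simp add: slack_def)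
  qed (simp add: slack_def)
  ultimately show ?thesis using invariant[of m] by simp
qed

definition cs_weight :: "nat \<Rightarrow> real \<Rightarrow> real \<Rightarrow> real \<Rightarrow> nat \<Rightarrow> real" where
  "cs_weight n \<alpha> \<beta> \<gamma> j =
     \<alpha> + (if j = 1 then \<beta> else 0) + (if j = n then \<gamma> else 0) + (if j = n + 1 then \<gamma> else 0)"

lemma sum_cs_weight:
  assumes "1 \<le> n"
  shows "(\<Sum>j=1..k. cs_weight n \<alpha> \<beta> \<gamma> j) =
    \<alpha> * real k + (if 1 \<le> k then \<beta> else 0) + (if n \<le> k then \<gamma> else 0) + (if n < k then \<gamma> else 0)"
  using assms by (simp add: cs_weight_def sum.distrib)

lemma sum_cs_weight_mult_le_CS:
  assumes "valid_disval m c" "1 \<le> n" "n < m"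
    and "0 \<le> \<alpha>" "0 \<le> \<beta>" "0 \<le> \<gamma>"
  shows "(\<Sum>j=1..m. cs_weight n \<alpha> \<beta> \<gamma> j * c j) \<le> (real n * \<alpha> + \<beta> + \<gamma>) * CS n m c"
proof -
  let ?S = "\<Sum>j=1..m. c j"
  have "cs_weight n \<alpha> \<beta> \<gamma> j * c j = \<alpha> * c j + (if j = 1 then \<beta> * c 1 else 0)
      + (if j = n then \<gamma> * c n else 0) + (if j = n + 1 then \<gamma> * c (n + 1) else 0)" for j
    by (simp add: cs_weight_def ring_distribs)
  then have "(\<Sum>j=1..m. cs_weight n \<alpha> \<beta> \<gamma> j * c j) = \<alpha> * ?S + \<beta> * c 1 + \<gamma> * (c n + c (n + 1))"
    using assms by (simp add: sum.distrib sum_distrib_left ring_distribs)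
  moreover have "?S / real n \<le> CS n m c" "c 1 \<le> CS n m c" "c n + c (n + 1) \<le> CS n m c"
    using assms by (auto simp: CS_def cext_def)
  then have "\<alpha> * ?S \<le> (real n * \<alpha>) * CS n m c" "\<beta> * c 1 \<le> \<beta> * CS n m c"
    "\<gamma> * (c n + c (n + 1)) \<le> \<gamma> * CS n m c"
    using assms mult_left_mono[of "?S / real n" "CS n m c" "real n * \<alpha>"] by (simp_all add: mult_left_mono)
  ultimately show ?thesis by (simp add: ring_distribs)
qed

section \<open>Descending sweeps and the tail condition\<close>

definition sweep :: "nat \<Rightarrow> nat \<Rightarrow> nat list" where
  "sweep l h = rev [Suc l..<Suc h]"

definition sweeps :: "(nat \<times> nat) list \<Rightarrow> nat list" where
  "sweeps ps = concat (map (\<lambda>(l, h). sweep l h) ps)"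

definition visits :: "'a::linorder \<Rightarrow> ('a \<times> 'a) list \<Rightarrow> nat" where
  "visits i ps = length (filter (\<lambda>(l, h). l < i \<and> i \<le> h) ps)"

lemma length_sweep [simp]: "length (sweep l h) = h - l"
  by (auto simp: sweep_def)

lemma take_sweep: "take q (sweep l h) = sweep (max l (h - q)) h"
proof -
  have "Suc l + (h - l - q) = Suc (max l (h - q))" by arith
  then show ?thesis by (simp only: sweep_def take_rev length_rev length_upt drop_upt diff_Suc_Suc)
qed

lemma count_list_upt: "count_list [a..<b] i = (if a \<le> i \<and> i < b then 1 else 0)"
  by (induction b) auto

lemma count_list_sweep: "count_list (sweep l h) i = (if l < i \<and> i \<le> h then 1 else 0)"
  by (simp add: sweep_def count_list_upt)

lemma set_sweep: "set (sweep l h) = {Suc l..h}"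
  by (auto simp: sweep_def)

lemma sweeps_Cons [simp]: "sweeps ((l, h) # ps) = sweep l h @ sweeps ps"
  by (simp add: sweeps_def)

lemma sweeps_concat_replicate: "sweeps (concat (replicate k ps)) = concat (replicate k (sweeps ps))"
  by (induction k) (simp_all add: sweeps_def)

lemma visits_map_int: "visits (int i) (map (map_prod int int) ps) = visits i ps"
  by (simp add: visits_def comp_def case_prod_unfold)

text \<open>With \<open>\<alpha> = g / (5 n)\<close> this says \<open>t \<le> \<alpha> q + 6/5\<close> and \<open>t \<le> \<alpha> (q + i) + 1/5\<close>: what the prefix
  condition demands of the \<open>t\<close> picks of agent \<open>i\<close> among the first \<open>q\<close> tail positions, on top of
  its two picks in the ridge rounds.\<close>

definition tail_bound :: "'a::linordered_semidom \<Rightarrow> 'a \<Rightarrow> 'a \<Rightarrow> 'a \<Rightarrow> 'a \<Rightarrow> bool" where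
  "tail_bound n g i q t \<longleftrightarrow> t = 0 \<or> (5 * t * n \<le> g * q + 6 * n \<and> 5 * t * n \<le> g * (q + i) + n)"

lemma tail_bound_of_nat:
  "tail_bound (of_nat n :: 'a::linordered_semidom) (of_nat g) (of_nat i) (of_nat q) (of_nat t)
     \<longleftrightarrow> tail_bound n g i q t"
proof -
  have "5 * of_nat t * of_nat n = (of_nat (5 * t * n) :: 'a)"
    "of_nat g * of_nat q + 6 * of_nat n = (of_nat (g * q + 6 * n) :: 'a)"
    "of_nat g * (of_nat q + of_nat i) + of_nat n = (of_nat (g * (q + i) + n) :: 'a)"
    by simp_all
  then show ?thesis unfolding tail_bound_def by (simp only: of_nat_le_iff of_nat_eq_0_iff)
qed

lemma tail_bound_mono:
  fixes n g i q q' t :: int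
  assumes "tail_bound n g i q t" "q \<le> q'" "0 \<le> g"
  shows "tail_bound n g i q' t"
  using assms mult_left_mono[of q q' g] unfolding tail_bound_def by (auto simp: distrib_left)

text \<open>\<open>q\<close> tail positions and \<open>t\<close> picks of \<open>i\<close> precede the sweeps; within the sweep \<open>(l, h)\<close>
  agent \<open>i\<close> is picked at its \<open>(h + 1 - i)\<close>-th position.\<close>

fun sweeps_ok :: "int \<Rightarrow> int \<Rightarrow> int \<Rightarrow> int \<Rightarrow> int \<Rightarrow> (int \<times> int) list \<Rightarrow> bool" where
  "sweeps_ok n g i q t [] = True"
| "sweeps_ok n g i q t ((l, h) # ps) \<longleftrightarrow>
     (l < i \<and> i \<le> h \<longrightarrow> tail_bound n g i (q + h + 1 - i) (t + 1))
     \<and> sweeps_ok n g i (q + (h - l)) (t + (if l < i \<and> i \<le> h then 1 else 0)) ps"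

lemma sweeps_ok_append:
  "sweeps_ok n g i q t (xs @ ys) \<longleftrightarrow>
     sweeps_ok n g i q t xs \<and> sweeps_ok n g i (q + (\<Sum>(l, h)\<leftarrow>xs. h - l)) (t + int (visits i xs)) ys"
  by (induction xs arbitrary: q t) (auto simp: visits_def algebra_simps)

lemma tail_bound_shift:
  fixes n g i q t c p :: "'a::linordered_idom"
  assumes "tail_bound n g i q t" "0 < t" "5 * c * n \<le> g * p"
  shows "tail_bound n g i (q + p) (t + c)"
  using assms unfolding tail_bound_def by (auto simp: algebra_simps)

lemma sweeps_ok_shift:
  assumes "sweeps_ok n g i q t ps" "0 \<le> t" "0 \<le> c" "5 * c * n \<le> g * p"
  shows "sweeps_ok n g i (q + p) (t + c) ps"
  using assms
proof (induction ps arbitrary: q t)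
  case (Cons lh ps)
  obtain l h where lh: "lh = (l, h)" by fastforce
  have "tail_bound n g i (q + h + 1 - i + p) (t + 1 + c)" if "l < i \<and> i \<le> h"
    using Cons.prems that tail_bound_shift[of n g i "q + h + 1 - i" "t + 1" c p]
    by (simp add: lh algebra_simps)
  moreover have "sweeps_ok n g i (q + (h - l) + p) (t + (if l < i \<and> i \<le> h then 1 else 0) + c) ps"
    using Cons lh by simp
  ultimately show ?case by (simp add: lh algebra_simps)
qed simp

lemma sweeps_ok_concat_replicate:
  assumes ok: "sweeps_ok n g i 0 0 ps"
    and dense: "5 * int (visits i ps) * n \<le> g * (\<Sum>(l, h)\<leftarrow>ps. h - l)"
  shows "sweeps_ok n g i 0 0 (concat (replicate r ps))"
proof -
  let ?L = "\<Sum>(l, h)\<leftarrow>ps. h - l" and ?V = "int (visits i ps)"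
  have "sweeps_ok n g i (int k * ?L) (int k * ?V) (concat (replicate r ps))" for k
  proof (induction r arbitrary: k)
    case (Suc r)
    have "5 * (int k * ?V) * n \<le> g * (int k * ?L)"
      using mult_left_mono[OF dense, of "int k"] by (simp add: algebra_simps)
    then have "sweeps_ok n g i (0 + int k * ?L) (0 + int k * ?V) ps"
      by (intro sweeps_ok_shift[OF ok]) auto
    moreover have "sweeps_ok n g i (int (Suc k) * ?L) (int (Suc k) * ?V) (concat (replicate r ps))"
      by (rule Suc.IH)
    ultimately show ?case by (simp add: sweeps_ok_append algebra_simps)
  qed simp
  from this[of 0] show ?thesis by simp
qed

lemma tail_bound_take_sweep:
  assumes visit: "l < i \<and> i \<le> h \<longrightarrow> tail_bound n g (int i) (q\<^sub>0 + int h + 1 - int i) (t\<^sub>0 + 1)"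
    and base: "tail_bound n g (int i) q\<^sub>0 t\<^sub>0" and "0 \<le> g"
  shows "tail_bound n g (int i) (q\<^sub>0 + int q) (t\<^sub>0 + int (count_list (take q (sweep l h)) i))"
proof (cases "max l (h - q) < i \<and> i \<le> h")
  case True
  then have "q\<^sub>0 + int h + 1 - int i \<le> q\<^sub>0 + int q" by linarith
  with True visit \<open>0 \<le> g\<close> show ?thesis
    by (simp add: take_sweep count_list_sweep tail_bound_mono)
next
  case False
  then have "count_list (take q (sweep l h)) i = 0"
    by (auto simp: take_sweep count_list_sweep)
  with base \<open>0 \<le> g\<close> show ?thesis by (simp add: tail_bound_mono)
qed

lemma tail_bound_take_sweeps:
  assumes "sweeps_ok n g (int i) q\<^sub>0 t\<^sub>0 (map (map_prod int int) ps)" "\<forall>(l, h)\<in>set ps. l \<le> h"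
    and "tail_bound n g (int i) q\<^sub>0 t\<^sub>0" "0 \<le> g"
  shows "tail_bound n g (int i) (q\<^sub>0 + int q) (t\<^sub>0 + int (count_list (take q (sweeps ps)) i))"
  using assms
proof (induction ps arbitrary: q\<^sub>0 t\<^sub>0 q)
  case Nil
  then show ?case by (simp add: sweeps_def tail_bound_mono)
next
  case (Cons lh ps)
  obtain l h where lh: "lh = (l, h)" by fastforce
  have visit: "l < i \<and> i \<le> h \<longrightarrow> tail_bound n g (int i) (q\<^sub>0 + int h + 1 - int i) (t\<^sub>0 + 1)"
    using Cons.prems(1) by (simp add: lh)
  note head = tail_bound_take_sweep[OF visit Cons.prems(3,4)]
  show ?case
  proof (cases "q \<le> h - l")
    case True
    then show ?thesis using head[of q] by (simp add: lh)
  next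
    case False
    define q' where "q' = q - (h - l)"
    have "l \<le> h" using Cons.prems(2) by (simp add: lh)
    have "tail_bound n g (int i) (q\<^sub>0 + (int h - int l)) (t\<^sub>0 + int (count_list (sweep l h) i))"
      using head[of "h - l"] \<open>l \<le> h\<close> by (simp add: of_nat_diff)
    moreover have "sweeps_ok n g (int i) (q\<^sub>0 + (int h - int l)) (t\<^sub>0 + int (count_list (sweep l h) i))
        (map (map_prod int int) ps)"
      using Cons.prems(1) by (auto simp: lh count_list_sweep)
    ultimately have "tail_bound n g (int i) (q\<^sub>0 + (int h - int l) + int q')
        (t\<^sub>0 + int (count_list (sweep l h) i) + int (count_list (take q' (sweeps ps)) i))"
      using Cons.IH Cons.prems(2,4) by (simp add: lh)
    moreover have "q = (h - l) + q'" using False q'_def by simp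
    ultimately show ?thesis using \<open>l \<le> h\<close> by (simp add: lh algebra_simps of_nat_diff)
  qed
qed

section \<open>The periodic sweep pattern\<close>

definition sweep_pattern :: "'a::zero \<Rightarrow> 'a \<Rightarrow> 'a \<Rightarrow> 'a \<Rightarrow> 'a \<Rightarrow> 'a \<Rightarrow> ('a \<times> 'a) list" where
  "sweep_pattern n b\<^sub>1 b\<^sub>2 b\<^sub>3 b\<^sub>4 b\<^sub>5 =
     [(b\<^sub>1, n), (b\<^sub>3, n), (0, b\<^sub>1), (b\<^sub>1, n), (b\<^sub>4, b\<^sub>5), (b\<^sub>2, n), (0, b\<^sub>1), (b\<^sub>1, n), (b\<^sub>4, b\<^sub>5), (0, n)]"

text \<open>The breakpoints \<open>\<lfloor>n/4\<rfloor>, \<lfloor>2n/5\<rfloor>, \<lfloor>n/2\<rfloor>, \<lfloor>5n/8\<rfloor>, \<lfloor>3n/4\<rfloor>\<close> are abstracted by their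
  defining inequalities, so that on each segment of agents the checks are linear arithmetic.\<close>

locale ridge_breakpoints =
  fixes n b\<^sub>1 b\<^sub>2 b\<^sub>3 b\<^sub>4 b\<^sub>5 :: int
  assumes b\<^sub>1: "4 * b\<^sub>1 \<le> n" "n \<le> 4 * b\<^sub>1 + 3"
    and b\<^sub>2: "5 * b\<^sub>2 \<le> 2 * n" "2 * n \<le> 5 * b\<^sub>2 + 4"
    and b\<^sub>3: "2 * b\<^sub>3 \<le> n" "n \<le> 2 * b\<^sub>3 + 1"
    and b\<^sub>4: "8 * b\<^sub>4 \<le> 5 * n" "5 * n \<le> 8 * b\<^sub>4 + 7"
    and b\<^sub>5: "4 * b\<^sub>5 \<le> 3 * n" "3 * n \<le> 4 * b\<^sub>5 + 3"
    and pattern_long: "5 * n \<le> (\<Sum>(l, h)\<leftarrow>sweep_pattern n b\<^sub>1 b\<^sub>2 b\<^sub>3 b\<^sub>4 b\<^sub>5. h - l)"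
begin

lemma segment_cases:
  obtains "i \<le> b\<^sub>1" | "b\<^sub>1 < i" "i \<le> b\<^sub>2" | "b\<^sub>2 < i" "i \<le> b\<^sub>3" | "b\<^sub>3 < i" "i \<le> b\<^sub>4"
    | "b\<^sub>4 < i" "i \<le> b\<^sub>5" | "b\<^sub>5 < i"
  by fastforce

lemma visits_pattern_bounds:
  assumes "0 < i" "i \<le> n"
  defines "g \<equiv> int (visits i (sweep_pattern n b\<^sub>1 b\<^sub>2 b\<^sub>3 b\<^sub>4 b\<^sub>5))"
  shows "g \<le> 8 \<and> g * (i - 1) \<le> 6 * n \<and> g * (n - i) \<le> 3 * n"
  using assms(1,2) b\<^sub>1 b\<^sub>2 b\<^sub>3 b\<^sub>4 b\<^sub>5
  by (cases i rule: segment_cases) (simp_all add: g_def sweep_pattern_def visits_def)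

lemma sweeps_ok_pattern:
  assumes "0 < i" "i \<le> n"
  shows "sweeps_ok n (int (visits i (sweep_pattern n b\<^sub>1 b\<^sub>2 b\<^sub>3 b\<^sub>4 b\<^sub>5))) i 0 0 (sweep_pattern n b\<^sub>1 b\<^sub>2 b\<^sub>3 b\<^sub>4 b\<^sub>5)"
  using assms b\<^sub>1 b\<^sub>2 b\<^sub>3 b\<^sub>4 b\<^sub>5 pattern_long
  by (cases i rule: segment_cases) (simp_all add: sweep_pattern_def visits_def tail_bound_def)

end

definition ridge_period :: "nat \<Rightarrow> (nat \<times> nat) list" where
  "ridge_period n = sweep_pattern n (n div 4) (2 * n div 5) (n div 2) (5 * n div 8) (3 * n div 4)"

lemma ridge_period_int:
  "map (map_prod int int) (ridge_period n) =
     sweep_pattern (int n) (int (n div 4)) (int (2 * n div 5)) (int (n div 2)) (int (5 * n div 8)) (int (3 * n div 4))"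
  by (simp add: ridge_period_def sweep_pattern_def)

lemma ridge_period_bounds: "(l, h) \<in> set (ridge_period n) \<Longrightarrow> l \<le> h \<and> h \<le> n"
  by (auto simp: ridge_period_def sweep_pattern_def)

lemma ridge_breakpoints_div:
  "ridge_breakpoints (int n) (int (n div 4)) (int (2 * n div 5)) (int (n div 2)) (int (5 * n div 8)) (int (3 * n div 4))"
proof
  have "n div 4 + 2 * n div 5 + n div 2 + 2 * (5 * n div 8) \<le> n + 2 * (3 * n div 4)"
  proof (cases "n < 15")
    \<comment> \<open>the floor inequalities alone suffice only from \<open>n = 15\<close> on\<close>
    case True
    then have "n \<in> set [0..<15]" by simp
    then show ?thesis by (simp add: upt_rec) (elim disjE; simp)
  qed linarith
  then show "5 * int n \<le> (\<Sum>(l, h)\<leftarrow>sweep_pattern (int n) (int (n div 4)) (int (2 * n div 5))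
      (int (n div 2)) (int (5 * n div 8)) (int (3 * n div 4)). h - l)"
    by (simp add: sweep_pattern_def)
qed linarith+

section \<open>The ridge order\<close>

definition ridge_tail :: "nat \<Rightarrow> nat \<Rightarrow> nat list" where
  "ridge_tail n m = sweeps (concat (replicate m (ridge_period n)))"

definition ridge_order :: "nat \<Rightarrow> nat \<Rightarrow> nat list" where
  "ridge_order n m = [1..<Suc n] @ sweep 0 n @ take (m - 2 * n) (ridge_tail n m)"

lemma length_ridge_tail: "m * n \<le> length (ridge_tail n m)"
proof -
  have "n \<le> length (sweeps (ridge_period n))"
    by (simp add: ridge_period_def sweep_pattern_def)
  then show ?thesis
    by (simp add: ridge_tail_def sweeps_concat_replicate length_concat sum_list_replicate)
qed

lemma length_ridge_order:
  assumes "1 \<le> n" "2 * n \<le> m"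
  shows "length (ridge_order n m) = m"
proof -
  have "m - 2 * n \<le> length (ridge_tail n m)"
    using length_ridge_tail[of m n] assms by (metis diff_le_self le_trans mult_le_mono2 nat_mult_1_right)
  then show ?thesis using assms by (simp add: ridge_order_def)
qed

lemma ridge_ridge_order:
  assumes "1 \<le> n" "2 * n \<le> m"
  shows "ridge n m (ridge_order n m)"
  unfolding ridge_def picking_order_def
proof (intro conjI allI impI)
  show "length (ridge_order n m) = m" using length_ridge_order[OF assms] .
  have "set (ridge_tail n m) \<subseteq> {1..n}"
    using ridge_period_bounds[of _ _ n]
    by (force simp: ridge_tail_def sweeps_def set_sweep)
  then show "set (ridge_order n m) \<subseteq> {1..n}"
    using set_take_subset[of "m - 2 * n" "ridge_tail n m"] by (auto simp: ridge_order_def set_sweep)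
  fix r assume r: "1 \<le> r \<and> r \<le> n"
  then have "r - 1 < n" by linarith
  with r show "ridge_order n m ! (r - 1) = r"
    by (simp add: ridge_order_def nth_append del: upt_Suc)
  have "n + r - 1 = length [1..<Suc n] + (r - 1)" using r by simp
  then have "ridge_order n m ! (n + r - 1) = (sweep 0 n @ take (m - 2 * n) (ridge_tail n m)) ! (r - 1)"
    by (simp only: ridge_order_def append_assoc nth_append_length_plus)
  with \<open>r - 1 < n\<close> have "ridge_order n m ! (n + r - 1) = sweep 0 n ! (r - 1)"
    by (simp add: nth_append)
  then show "ridge_order n m ! (n + r - 1) = n - r + 1"
    using r \<open>r - 1 < n\<close> by (simp add: sweep_def rev_nth del: upt_Suc)
qed (use assms in simp)

lemma count_take_ridge_order_head:
  assumes "1 \<le> i" "i \<le> n" "k \<le> 2 * n"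
  shows "count_list (take k (ridge_order n m)) i = (if i \<le> k then 1 else 0) + (if 2 * n < k + i then 1 else 0)"
proof -
  have "take k [1..<Suc n] = [1..<Suc (min k n)]"
    by (cases "k \<le> n") (simp_all del: upt_Suc)
  moreover have "take k (ridge_order n m) = take k [1..<Suc n] @ take (k - n) (sweep 0 n)"
    using assms by (simp add: ridge_order_def del: upt_Suc)
  ultimately have "take k (ridge_order n m) = [1..<Suc (min k n)] @ take (k - n) (sweep 0 n)"
    by simp
  then show ?thesis
    using assms by (auto simp: min_def count_list_upt take_sweep count_list_sweep simp del: upt_Suc)
qed

lemma count_take_ridge_order_tail:
  assumes "1 \<le> i" "i \<le> n" "2 * n \<le> k" "k \<le> m"
  shows "count_list (take k (ridge_order n m)) i = 2 + count_list (take (k - 2 * n) (ridge_tail n m)) i"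
  using assms by (simp add: ridge_order_def count_list_upt count_list_sweep mult_2 del: upt_Suc)

lemma card_alloc_inter_atLeastAtMost:
  "k \<le> length S \<Longrightarrow> card (alloc S i \<inter> {1..k}) = count_list (take k S) i"
proof (induction k)
  case (Suc k)
  have "alloc S i \<inter> {1..Suc k} = alloc S i \<inter> {1..k} \<union> (if S ! k = i then {Suc k} else {})"
    using Suc.prems by (auto simp: alloc_def le_Suc_eq)
  moreover have "take (Suc k) S = take k S @ [S ! k]"
    using Suc.prems by (simp add: take_Suc_conv_app_nth)
  ultimately show ?case using Suc by (auto simp: card_insert_if)
qed simp

lemma ridge_visits_bounds:
  assumes "1 \<le> i" "i \<le> n"
  defines "g \<equiv> real (visits i (ridge_period n))"
  shows "g \<le> 8" "g * (real i - 1) \<le> 6 * real n" "g * (real n - real i) \<le> 3 * real n"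
proof -
  interpret ridge_breakpoints "int n" "int (n div 4)" "int (2 * n div 5)" "int (n div 2)"
    "int (5 * n div 8)" "int (3 * n div 4)"
    by (rule ridge_breakpoints_div)
  let ?g = "int (visits i (ridge_period n))"
  have "?g \<le> 8 \<and> ?g * (int i - 1) \<le> 6 * int n \<and> ?g * (int n - int i) \<le> 3 * int n"
    using visits_pattern_bounds[of "int i"] assms
    by (simp flip: ridge_period_int visits_map_int)
  then have "visits i (ridge_period n) \<le> 8"
    "real_of_int (?g * (int i - 1)) \<le> real_of_int (6 * int n)"
    "real_of_int (?g * (int n - int i)) \<le> real_of_int (3 * int n)"
    by (simp_all only: of_int_le_iff) simp
  then show "g \<le> 8" "g * (real i - 1) \<le> 6 * real n" "g * (real n - real i) \<le> 3 * real n"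
    unfolding g_def by simp_all
qed

lemma tail_bound_ridge_tail:
  assumes "1 \<le> i" "i \<le> n"
  shows "tail_bound n (visits i (ridge_period n)) i q (count_list (take q (ridge_tail n m)) i)"
proof -
  interpret ridge_breakpoints "int n" "int (n div 4)" "int (2 * n div 5)" "int (n div 2)"
    "int (5 * n div 8)" "int (3 * n div 4)"
    by (rule ridge_breakpoints_div)
  let ?P = "map (map_prod int int) (ridge_period n)" and ?g = "int (visits i (ridge_period n))"
  have "5 * ?g * int n \<le> ?g * (\<Sum>(l, h)\<leftarrow>?P. h - l)"
    using mult_left_mono[OF pattern_long, of ?g] by (simp add: ridge_period_int algebra_simps)
  moreover have "sweeps_ok (int n) ?g (int i) 0 0 ?P"
    using sweeps_ok_pattern[of "int i"] assms by (simp add: ridge_period_int flip: visits_map_int)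
  ultimately have "sweeps_ok (int n) ?g (int i) 0 0 (map (map_prod int int) (concat (replicate m (ridge_period n))))"
    using sweeps_ok_concat_replicate[of "int n" ?g "int i" ?P m]
    by (simp add: map_concat visits_map_int)
  then have "tail_bound (int n) ?g (int i) (0 + int q) (0 + int (count_list (take q (ridge_tail n m)) i))"
    unfolding ridge_tail_def
    by (rule tail_bound_take_sweeps) (auto simp: tail_bound_def dest: ridge_period_bounds)
  then show ?thesis using tail_bound_of_nat[where 'a=int] by simp
qed

lemma head_count_le_weights:
  fixes \<alpha> \<beta> \<gamma> :: real
  assumes "0 \<le> \<alpha>" "\<alpha> * (real i - 1) \<le> 6/5" "0 \<le> \<gamma>" "1 \<le> i" "i \<le> n" "k \<le> 2 * n"
    and \<beta>: "\<beta> = max 0 (1 - \<alpha> * real i)" and "\<gamma> = 8/5 - \<alpha> * real n - \<beta>"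
  shows "real ((if i \<le> k then 1 else 0) + (if 2 * n < k + i then 1 else 0))
    \<le> \<alpha> * real k + (if 1 \<le> k then \<beta> else 0) + (if n \<le> k then \<gamma> else 0) + (if n < k then \<gamma> else 0)"
proof -
  have mono: "\<alpha> * real x \<le> \<alpha> * real k" if "x \<le> k" for x
    using that \<open>0 \<le> \<alpha>\<close> by (simp add: mult_left_mono)
  consider "k < i" | "i \<le> k" "k + i \<le> 2 * n" | "2 * n < k + i" by linarith
  then show ?thesis
  proof cases
    case 1
    then show ?thesis using assms by auto
  next
    case 2
    then have "1 \<le> \<alpha> * real k + \<beta>" using mono[of i] \<beta> by auto
    with 2 \<beta> \<open>0 \<le> \<gamma>\<close> \<open>1 \<le> i\<close> show ?thesis by auto
  next
    case 3
    then have "\<alpha> * real (2 * n + 1 - i) \<le> \<alpha> * real k" using mono by simp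
    moreover have "\<alpha> * real (2 * n + 1 - i) = 2 * (\<alpha> * real n) + \<alpha> - \<alpha> * real i"
      using \<open>i \<le> n\<close> by (simp add: of_nat_diff algebra_simps)
    moreover have "\<alpha> * real i - \<alpha> \<le> 6/5" using assms(2) by (simp add: algebra_simps)
    ultimately show ?thesis using 3 assms by (auto simp: max_def)
  qed
qed

lemma tail_count_le_weights:
  fixes n g i q t \<alpha> \<beta> :: real
  assumes "0 < n" "0 \<le> g" "0 \<le> i" "0 \<le> q" and tail: "tail_bound n g i q t"
    and \<alpha>: "\<alpha> = g / (5 * n)" and \<beta>: "\<beta> = max 0 (1 - \<alpha> * i)"
  shows "2 + t \<le> \<alpha> * (2 * n + q) + \<beta> + 2 * (8/5 - \<alpha> * n - \<beta>)"
proof -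
  have "0 \<le> \<alpha>" using assms by simp
  have "t \<le> \<alpha> * q + 6/5 - \<beta>"
  proof (cases "t = 0")
    case True
    have "0 \<le> \<alpha> * i" "0 \<le> \<alpha> * q" using \<open>0 \<le> \<alpha>\<close> \<open>0 \<le> i\<close> \<open>0 \<le> q\<close> by simp_all
    with True \<beta> show ?thesis by auto
  next
    case False
    with tail have "5 * t * n \<le> g * q + 6 * n" "5 * t * n \<le> g * (q + i) + n"
      by (auto simp: tail_bound_def)
    then have "t \<le> \<alpha> * q + 6/5" "t \<le> \<alpha> * (q + i) + 1/5"
      using \<open>0 < n\<close> by (simp_all add: \<alpha> field_simps)
    then show ?thesis using \<beta> by (auto simp: algebra_simps)
  qed
  then show ?thesis by (simp add: algebra_simps)
qed

lemma ridge_weights: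
  assumes "1 \<le> i" "i \<le> n"
    and \<alpha>: "\<alpha> = real (visits i (ridge_period n)) / (5 * real n)"
    and \<beta>: "\<beta> = max 0 (1 - \<alpha> * real i)" and \<gamma>: "\<gamma> = 8/5 - \<alpha> * real n - \<beta>"
  shows "0 \<le> \<alpha>" "0 \<le> \<beta>" "0 \<le> \<gamma>" "\<alpha> * (real i - 1) \<le> 6/5"
proof -
  let ?g = "real (visits i (ridge_period n))"
  note g = ridge_visits_bounds[OF assms(1,2)]
  have n: "0 < real n" using assms by simp
  show "0 \<le> \<alpha>" "0 \<le> \<beta>" using \<alpha> \<beta> by simp_all
  have "\<alpha> * (real i - 1) = ?g * (real i - 1) / (5 * real n)" using \<alpha> by simp
  also have "\<dots> \<le> 6/5" using g(2) n by (simp add: field_simps)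
  finally show "\<alpha> * (real i - 1) \<le> 6/5" .
  have "\<alpha> * real n \<le> 8/5" using g(1) n \<alpha> by simp
  moreover have "\<alpha> * real n - \<alpha> * real i \<le> 3/5"
  proof -
    have "\<alpha> * real n - \<alpha> * real i = \<alpha> * (real n - real i)"
      by (simp add: algebra_simps)
    also have "\<dots> = ?g * (real n - real i) / (5 * real n)"
      using \<alpha> by simp
    also have "\<dots> \<le> 3/5" using g(3) n by (simp add: field_simps)
    finally show ?thesis .
  qed
  ultimately show "0 \<le> \<gamma>" using \<beta> \<gamma> by auto
qed

lemma count_take_ridge_order_le_sum_cs_weight:
  assumes "1 \<le> i" "i \<le> n" "k \<le> m"
    and \<alpha>: "\<alpha> = real (visits i (ridge_period n)) / (5 * real n)"
    and \<beta>: "\<beta> = max 0 (1 - \<alpha> * real i)" and \<gamma>: "\<gamma> = 8/5 - \<alpha> * real n - \<beta>"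
  shows "real (count_list (take k (ridge_order n m)) i) \<le> (\<Sum>j=1..k. cs_weight n \<alpha> \<beta> \<gamma> j)"
proof -
  have prefix: "(\<Sum>j=1..k. cs_weight n \<alpha> \<beta> \<gamma> j) =
      \<alpha> * real k + (if 1 \<le> k then \<beta> else 0) + (if n \<le> k then \<gamma> else 0) + (if n < k then \<gamma> else 0)"
    using assms(1,2) by (intro sum_cs_weight) simp
  show ?thesis
  proof (cases "k \<le> 2 * n")
    case True
    then show ?thesis unfolding prefix
      using head_count_le_weights[OF ridge_weights(1,4,3)[OF assms(1,2,4-6)] assms(1,2) True \<beta> \<gamma>]
      by (simp add: count_take_ridge_order_head[OF assms(1,2) True])
  next
    case False
    define q where "q = k - 2 * n"
    define t where "t = count_list (take q (ridge_tail n m)) i"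
    have "tail_bound (real n) (real (visits i (ridge_period n))) (real i) (real q) (real t)"
      unfolding t_def tail_bound_of_nat by (rule tail_bound_ridge_tail[OF assms(1,2)])
    then have "2 + real t \<le> \<alpha> * (2 * real n + real q) + \<beta> + 2 * \<gamma>"
      using tail_count_le_weights[OF _ _ _ _ _ \<alpha> \<beta>] assms(1,2) \<gamma> by simp
    moreover have "count_list (take k (ridge_order n m)) i = 2 + t" "k = 2 * n + q"
      using False assms(1-3) count_take_ridge_order_tail[of i n k m] by (simp_all add: t_def q_def)
    ultimately show ?thesis unfolding prefix using assms(1,2) by simp
  qed
qed

lemma sum_alloc_ridge_order_le:
  assumes "1 \<le> i" "i \<le> n" "2 * n \<le> m" and c: "valid_disval m c"
  shows "(\<Sum>j\<in>alloc (ridge_order n m) i. c j) \<le> 8/5 * CS n m c"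
proof -
  define \<alpha> where "\<alpha> = real (visits i (ridge_period n)) / (5 * real n)"
  define \<beta> where "\<beta> = max 0 (1 - \<alpha> * real i)"
  define \<gamma> where "\<gamma> = 8/5 - \<alpha> * real n - \<beta>"
  note weights = ridge_weights[OF assms(1,2) \<alpha>_def \<beta>_def \<gamma>_def]
  have len: "length (ridge_order n m) = m" using assms by (simp add: length_ridge_order)
  have "(\<Sum>j\<in>alloc (ridge_order n m) i. c j) \<le> (\<Sum>j=1..m. cs_weight n \<alpha> \<beta> \<gamma> j * c j)"
  proof (rule sum_nonincreasing_le_weighted_sum)
    show "alloc (ridge_order n m) i \<subseteq> {1..m}" by (auto simp: alloc_def len)
    show "c (Suc j) \<le> c j" if "1 \<le> j" "j < m" for j
      using c that by (auto simp: valid_disval_def)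
    show "0 \<le> c j" if "1 \<le> j" "j \<le> m" for j
      using c that by (auto simp: valid_disval_def)
    show "real (card (alloc (ridge_order n m) i \<inter> {1..k})) \<le> (\<Sum>j=1..k. cs_weight n \<alpha> \<beta> \<gamma> j)"
      if "k \<le> m" for k
      using that len card_alloc_inter_atLeastAtMost[of k "ridge_order n m" i]
        count_take_ridge_order_le_sum_cs_weight[OF assms(1,2) that \<alpha>_def \<beta>_def \<gamma>_def]
      by simp
  qed
  also have "\<dots> \<le> (real n * \<alpha> + \<beta> + \<gamma>) * CS n m c"
    using assms weights by (intro sum_cs_weight_mult_le_CS) auto
  also have "real n * \<alpha> + \<beta> + \<gamma> = 8/5"
    by (simp add: \<gamma>_def)
  finally show ?thesis .
qed

lemma ratio_ridge_order_le:
  assumes "1 \<le> n" "2 * n \<le> m"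
  shows "ratio n (ridge_order n m) \<le> ereal (8/5)"
  unfolding ratio_def length_ridge_order[OF assms]
proof (rule SUP_least)
  fix p assume "p \<in> {(i, c). i \<in> {1..n} \<and> valid_disval m c \<and> 0 < CS n m c}"
  then obtain i c where "p = (i, c)" "i \<in> {1..n}" "valid_disval m c" "0 < CS n m c"
    by auto
  then show "ereal ((\<Sum>j\<in>alloc (ridge_order n m) (fst p). snd p j) / CS n m (snd p)) \<le> ereal (8/5)"
    using sum_alloc_ridge_order_le[of i n m c] assms by (simp add: pos_divide_le_eq)
qed

theorem theorem6:
  fixes n :: nat
  assumes "1 \<le> n"
  shows "hat_r n \<le> ereal (8 / 5)"
  unfolding hat_r_def
proof (rule SUP_least)
  fix m assume "m \<in> {m. 2 * n \<le> m}"
  then have m: "2 * n \<le> m" by simp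
  have "finite {S. ridge n m S}"
    by (rule finite_subset[OF _ finite_lists_length_eq[of "{1..n}" m]])
      (auto simp: ridge_def picking_order_def)
  then have "hat_r_nm n m \<le> ratio n (ridge_order n m)"
    unfolding hat_r_nm_def using ridge_ridge_order[OF assms m] by (intro Min_le) auto
  also have "\<dots> \<le> ereal (8/5)" by (rule ratio_ridge_order_le[OF assms m])
  finally show "hat_r_nm n m \<le> ereal (8 / 5)" by simp
qed

end
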